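(* Let $\pi=(\sigma,\mathbf z)\in\mathsf{G}_{r,n}$ and let $\mathbf f=f(\pi)$ be its minimum sequence. Then $\phi(\pi)\in\mathsf{G}_{r,n,\mathbf f}$, where $\phi=(\text{B-code})^{-1}\circ(\text{A-code})$.
   Context: $\mathsf{G}_{r,n}=C_r\wr\mathfrak S_n$: pairs $(\sigma,\mathbf z)$, $\sigma\in\mathfrak S_n$, $\mathbf z\in(\mathbb Z/r)^n$, written $\sigma_1^{[z_1]}\cdots\sigma_n^{[z_n]}$ (colors in $\{0,\dots,r-1\}$, read mod $r$). For a nondecreasing integer sequence $\mathbf f=(f_1,\dots,f_n)$ with $1\le f_1\le\cdots\le f_n\le n$, $\mathsf{G}_{r,n,\mathbf f}=\{(\sigma,\mathbf z)\in\mathsf{G}_{r,n}:\sigma(i)\le f_i\ \forall i\}$. The minimum sequence $f(\pi)$ of $\pi=(\sigma,\mathbf z)$ is the componentwise smallest such $\mathbf f$ with $\pi\in\mathsf{G}_{r,n,\mathbf f}$, i.e. $f(\pi)_i=\max\{\sigma_1,\dots,\sigma_i\}$. $\mathsf{CS}_{r,n}=\{(c_1^{[e_1]},\dots,c_n^{[e_n]}):1\le c_i\le i,\ 0\le e_i<r\}$. A-code: $\pi^{(n)}=\pi$; for $j=n,\dots,1$, if base value $j$ is at position $p$ of $\pi^{(j)}$ with color $t$, set $c_j=p,e_j=t$ and delete that letter to get $\pi^{(j-1)}$; A-code$(\pi)=(c_j^{[e_j]})_j$. B-code: $\pi^{(n)}=\pi$; for $j=n,\dots,1$, writing $\pi^{(j)}=\tau_1^{[y_1]}\cdots\tau_j^{[y_j]}$,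 $c_j$ = position of base value $j$, $z$ its color, $e_j\equiv-z\pmod r$ in $\{0,\dots,r-1\}$; if $c_j<j$, $\pi^{(j-1)}$ is obtained by replacing the letter at position $c_j$ by $\tau_j^{[y_j-e_j]}$ and deleting the last letter, and if $c_j=j$ by deleting the last letter; B-code$(\pi)=(c_j^{[e_j]})_j$. Both codes are bijections $\mathsf{G}_{r,n}\to\mathsf{CS}_{r,n}$. *)

theory Defs
  imports Main
begin

text \<open>A colored permutation \<open>\<sigma>\<^sub>1\<^sup>[z\<^sub>1] ... \<sigma>\<^sub>n\<^sup>[z\<^sub>n]\<close> is represented as the list
  \<open>[(\<sigma>\<^sub>1,z\<^sub>1), ..., (\<sigma>\<^sub>n,z\<^sub>n)]\<close>; list index \<open>i\<close> (0-based) is position \<open>i+1\<close>.\<close>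

type_synonym cword = "(nat \<times> nat) list"

definition G :: "nat \<Rightarrow> nat \<Rightarrow> cword set" where
  "G r n = {w. length w = n \<and> distinct (map fst w) \<and> set (map fst w) = {1..n}
                \<and> (\<forall>x\<in>set w. snd x < r)}"

text \<open>Colored sequences \<open>CS_{r,n}\<close>: the j-th entry (1-based) is \<open>(c_j, e_j)\<close>.\<close>
definition CS :: "nat \<Rightarrow> nat \<Rightarrow> cword set" where
  "CS r n = {c. length c = n \<and> (\<forall>j<n. 1 \<le> fst (c!j) \<and> fst (c!j) \<le> Suc j \<and> snd (c!j) < r)}"

definition pos :: "nat \<Rightarrow> cword \<Rightarrow> nat" where
  "pos v w = (LEAST i. i < length w \<and> fst (w!i) = v)"

text \<open>A-code: called with \<open>j = length w\<close>; the result lists \<open>c_1^{[e_1]},...,c_j^{[e_j]}\<close>.\<close>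
fun acode :: "nat \<Rightarrow> cword \<Rightarrow> cword" where
  "acode 0 w = []"
| "acode (Suc j) w =
     (let p = pos (Suc j) w
      in acode j (take p w @ drop (Suc p) w) @ [(Suc p, snd (w!p))])"

text \<open>Position \<open>c_j = Suc p\<close>; \<open>e_j \<equiv> -z (mod r)\<close>; if \<open>c_j < j\<close> the letter at
  position \<open>c_j\<close> is replaced by \<open>\<tau>_j^{[y_j - e_j]}\<close> and the last letter is deleted.\<close>
fun bcode :: "nat \<Rightarrow> nat \<Rightarrow> cword \<Rightarrow> cword" where
  "bcode r 0 w = []"
| "bcode r (Suc j) w =
     (let p = pos (Suc j) w;
          e = nat ((- int (snd (w!p))) mod int r);
          lst = last w;
          w' = (if p < j
                then (butlast w)[p := (fst lst, nat ((int (snd lst) - int e) mod int r))]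
                else butlast w)
      in bcode r j w' @ [(Suc p, e)])"

definition Acode :: "nat \<Rightarrow> cword \<Rightarrow> cword" where
  "Acode n w = acode n w"

definition Bcode :: "nat \<Rightarrow> nat \<Rightarrow> cword \<Rightarrow> cword" where
  "Bcode r n w = bcode r n w"

definition phi :: "nat \<Rightarrow> nat \<Rightarrow> cword \<Rightarrow> cword" where
  "phi r n w = inv_into (G r n) (Bcode r n) (Acode n w)"

definition Gf :: "nat \<Rightarrow> nat \<Rightarrow> (nat \<Rightarrow> nat) \<Rightarrow> cword set" where
  "Gf r n f = {w \<in> G r n. \<forall>i\<in>{1..n}. fst (w!(i - 1)) \<le> f i}"

definition minseq :: "cword \<Rightarrow> nat \<Rightarrow> nat" where
  "minseq w i = Max (fst ` set (take i w))"

end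

theory Submission
  imports Defs
begin

text \<open>The B-code can be inverted letter by letter: reading \<open>c\<^sub>1\<^sup>[e\<^sub>1],...,c\<^sub>n\<^sup>[e\<^sub>n]\<close> from the
  left, step \<open>j\<close> either appends the letter \<open>j\<close> or writes \<open>j\<close> at position \<open>c\<^sub>j\<close> and moves the
  displaced letter to the end. Hence \<open>\<phi>(\<pi>)\<close> is this decoder applied to the A-code of \<open>\<pi>\<close>.
  If the A-code records that the largest value \<open>j\<close> sits at position \<open>p\<close> of \<open>\<pi>\<close>, the last
  decoding step puts \<open>j\<close> at position \<open>p\<close> and does not touch the positions before \<open>p\<close>.
  By induction those positions are bounded by the prefix maxima of \<open>\<pi>\<close> with \<open>j\<close> deleted,
  which agree with those of \<open>\<pi>\<close> before \<open>p\<close>; every later position holds a value at most \<open>j\<close>,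
  and \<open>j\<close> is the maximum of the first \<open>p + 1\<close> letters of \<open>\<pi>\<close>.\<close>

lemma mem_G_iff:
  "w \<in> G r n \<longleftrightarrow> length w = n \<and> set (map fst w) = {1..n} \<and> (\<forall>x\<in>set w. snd x < r)"
proof
  assume "length w = n \<and> set (map fst w) = {1..n} \<and> (\<forall>x\<in>set w. snd x < r)"
  moreover from this have "distinct (map fst w)"
    by (intro card_distinct) simp
  ultimately show "w \<in> G r n" by (simp add: G_def)
qed (simp add: G_def)

lemma pos_eqI:
  assumes "distinct (map fst w)" "i < length w" "fst (w ! i) = v"
  shows "pos v w = i"
  unfolding pos_def
proof (rule Least_equality)
  fix k assume "k < length w \<and> fst (w ! k) = v"
  with assms have "k = i" by (metis length_map nth_eq_iff_index_eq nth_map)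
  then show "i \<le> k" by simp
qed (use assms in simp)

lemma pos_in_G:
  assumes "w \<in> G r n" "v \<in> {1..n}"
  shows "pos v w < n" "fst (w ! pos v w) = v"
proof -
  from assms have "v \<in> fst ` set w" by (auto simp: G_def)
  then have "\<exists>i. i < length w \<and> fst (w ! i) = v"
    by (auto simp: in_set_conv_nth) (metis fst_conv)
  then have "pos v w < length w \<and> fst (w ! pos v w) = v"
    unfolding pos_def by (rule LeastI_ex)
  with assms(1) show "pos v w < n" "fst (w ! pos v w) = v" by (auto simp: G_def)
qed

lemma minus_neg_color_mod: "(z::nat) < r \<Longrightarrow> (r - nat ((- int z) mod int r)) mod r = z"
  by (cases "z = 0") (simp_all add: zmod_zminus1_eq_if)

lemma neg_color_minus_mod: "(e::nat) < r \<Longrightarrow> nat ((- int ((r - e) mod r)) mod int r) = e"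
  by (cases "e = 0") (simp_all add: zmod_zminus1_eq_if of_nat_diff)

lemma add_color_sub_color: "(y::nat) < r \<Longrightarrow> nat ((int ((y + e) mod r) - int e) mod int r) = y"
proof -
  assume "y < r"
  have "(int ((y + e) mod r) - int e) mod int r = (int (y + e) - int e) mod int r"
    by (simp add: mod_diff_left_eq zmod_int)
  also have "\<dots> = int y" using \<open>y < r\<close> by simp
  finally show ?thesis by simp
qed

lemma sub_color_add_color: "(y::nat) < r \<Longrightarrow> (nat ((int y - int e) mod int r) + e) mod r = y"
proof -
  assume "y < r"
  then have "int ((nat ((int y - int e) mod int r) + e) mod r)
        = ((int y - int e) mod int r + int e) mod int r"
    by (simp add: zmod_int)
  also have "\<dots> = int y" using \<open>y < r\<close> by (simp add: mod_add_left_eq)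
  finally show ?thesis by simp
qed

fun bdecode_step :: "nat \<Rightarrow> nat \<times> nat \<Rightarrow> cword \<Rightarrow> cword" where
  "bdecode_step r (c, e) t =
     (let j = Suc (length t); z = (r - e) mod r
      in if c = j then t @ [(j, z)]
         else t[c - 1 := (j, z)] @ [(fst (t ! (c - 1)), (snd (t ! (c - 1)) + e) mod r)])"

definition bdecode :: "nat \<Rightarrow> cword \<Rightarrow> cword" where
  "bdecode r cs = fold (bdecode_step r) cs []"

lemma bdecode_step_append:
  assumes t: "t \<in> G r j" and e: "e < r"
  shows "bdecode_step r (Suc j, e) t \<in> G r (Suc j)"
    and "bcode r (Suc j) (bdecode_step r (Suc j, e) t) = bcode r j t @ [(Suc j, e)]"
proof -
  let ?z = "(r - e) mod r"
  from t have len: "length t = j" by (simp add: G_def)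
  with t e show G: "bdecode_step r (Suc j, e) t \<in> G r (Suc j)"
    by (auto simp: mem_G_iff image_Un)
  with len have "pos (Suc j) (t @ [(Suc j, ?z)]) = j"
    by (intro pos_eqI) (auto simp: G_def)
  with len e show "bcode r (Suc j) (bdecode_step r (Suc j, e) t) = bcode r j t @ [(Suc j, e)]"
    by (simp add: nth_append neg_color_minus_mod)
qed

lemma bdecode_step_swap:
  assumes t: "t \<in> G r j" and c: "1 \<le> c" "c \<le> j" and e: "e < r"
  shows "bdecode_step r (c, e) t \<in> G r (Suc j)"
    and "bcode r (Suc j) (bdecode_step r (c, e) t) = bcode r j t @ [(c, e)]"
proof -
  let ?z = "(r - e) mod r" and ?a = "t ! (c - 1)"
  let ?t' = "t[c - 1 := (Suc j, ?z)] @ [(fst ?a, (snd ?a + e) mod r)]"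
  from t have len: "length t = j" and vals: "set (map fst t) = {1..j}"
    and cols: "\<forall>x\<in>set t. snd x < r" and dist: "distinct (map fst t)"
    by (auto simp: G_def)
  from c len have idx: "c - 1 < length t" by simp
  then have a_in: "?a \<in> set t" by simp
  have step: "bdecode_step r (c, e) t = ?t'" using c len by simp
  have "set (map fst (t[c - 1 := (Suc j, ?z)])) = insert (Suc j) ({1..j} - {fst ?a})"
    using dist idx vals by (simp add: map_update set_update_distinct)
  moreover from a_in vals have "fst ?a \<in> {1..j}" by auto
  ultimately have "set (map fst ?t') = {1..Suc j}" by auto
  moreover have "\<forall>x\<in>set ?t'. snd x < r"
    using cols e by (auto dest: set_update_subset_insert[THEN subsetD])
  ultimately have G: "?t' \<in> G r (Suc j)" using len by (simp add: mem_G_iff)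
  then show "bdecode_step r (c, e) t \<in> G r (Suc j)" by (simp only: step)
  from G idx have "pos (Suc j) ?t' = c - 1"
    by (intro pos_eqI) (auto simp: G_def nth_append)
  moreover have "snd ?a < r" using cols a_in by blast
  ultimately show "bcode r (Suc j) (bdecode_step r (c, e) t) = bcode r j t @ [(c, e)]"
    using step idx len c e
    by (simp add: Let_def nth_append neg_color_minus_mod add_color_sub_color)
qed

lemma bdecode_step_in_G:
  assumes "t \<in> G r j" "1 \<le> c" "c \<le> Suc j" "e < r"
  shows "bdecode_step r (c, e) t \<in> G r (Suc j)"
  using assms bdecode_step_append(1)[of t r j e] bdecode_step_swap(1)[of t r j c e]
  by (cases "c = Suc j") auto

lemma bcode_bdecode_step:
  assumes "t \<in> G r j" "1 \<le> c" "c \<le> Suc j" "e < r"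
  shows "bcode r (Suc j) (bdecode_step r (c, e) t) = bcode r j t @ [(c, e)]"
  using assms bdecode_step_append(2)[of t r j e] bdecode_step_swap(2)[of t r j c e]
  by (cases "c = Suc j") auto

lemma snoc_in_CS_iff:
  "cs @ [ce] \<in> CS r (Suc n) \<longleftrightarrow> cs \<in> CS r n \<and> 1 \<le> fst ce \<and> fst ce \<le> Suc n \<and> snd ce < r"
  by (auto simp: CS_def nth_append less_Suc_eq)

lemma bdecode_in_G_and_bcode:
  "cs \<in> CS r n \<Longrightarrow> bdecode r cs \<in> G r n \<and> bcode r n (bdecode r cs) = cs"
proof (induction cs arbitrary: n rule: rev_induct)
  case Nil
  then show ?case by (simp add: CS_def bdecode_def mem_G_iff)
next
  case (snoc ce cs)
  then obtain m where n: "n = Suc m" by (cases n) (auto simp: CS_def)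
  obtain c e where ce: "ce = (c, e)" by fastforce
  from snoc.prems have "cs \<in> CS r m" "1 \<le> c" "c \<le> Suc m" "e < r"
    by (simp_all add: n ce snoc_in_CS_iff)
  with snoc.IH bdecode_step_in_G bcode_bdecode_step show ?case
    by (simp add: n ce bdecode_def del: bdecode_step.simps)
qed

definition breduce :: "nat \<Rightarrow> nat \<Rightarrow> cword \<Rightarrow> cword" where
  "breduce r j w =
     (let p = pos (Suc j) w;
          e = nat ((- int (snd (w ! p))) mod int r);
          lst = last w
      in if p < j then (butlast w)[p := (fst lst, nat ((int (snd lst) - int e) mod int r))]
         else butlast w)"

lemma bcode_Suc:
  "bcode r (Suc j) w = bcode r j (breduce r j w)
     @ [(Suc (pos (Suc j) w), nat ((- int (snd (w ! pos (Suc j) w))) mod int r))]"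
  by (simp add: breduce_def Let_def)

lemma butlast_in_G:
  assumes "B @ [x] \<in> G r (Suc j)" "fst x = Suc j"
  shows "B \<in> G r j"
proof -
  from assms have "insert (Suc j) (fst ` set B) = {1..Suc j}" "Suc j \<notin> fst ` set B"
    by (simp_all add: G_def)
  then have "set (map fst B) = {1..Suc j} - {Suc j}" by (metis Diff_insert_absorb list.set_map)
  also have "\<dots> = {1..j}" by auto
  moreover from assms have "length B = j" "\<forall>x\<in>set B. snd x < r" by (simp_all add: G_def)
  ultimately show ?thesis by (simp add: mem_G_iff)
qed

lemma butlast_update_in_G:
  assumes w: "B @ [l] \<in> G r (Suc j)" and p: "p < length B" "fst (B ! p) = Suc j" and y: "y < r"
  shows "B[p := (fst l, y)] \<in> G r j"
proof -
  from w have dist: "distinct (map fst B)" "fst l \<notin> fst ` set B"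
    and vals: "insert (fst l) (fst ` set B) = {1..Suc j}" by (auto simp: G_def)
  from p have "B ! p \<in> set B" by simp
  with p dist have "fst l \<noteq> Suc j" by (metis imageI)
  have "set (map fst (B[p := (fst l, y)])) = insert (fst l) (fst ` set B - {Suc j})"
    using dist p by (simp add: map_update set_update_distinct)
  also have "\<dots> = {1..Suc j} - {Suc j}"
    using vals \<open>fst l \<noteq> Suc j\<close> by (metis insert_Diff_if singletonD)
  also have "\<dots> = {1..j}" by auto
  finally show ?thesis
    using w p y by (auto simp: mem_G_iff dest: set_update_subset_insert[THEN subsetD])
qed

lemma breduce_in_G_and_bdecode_step:
  assumes w: "w \<in> G r (Suc j)"
  defines "p \<equiv> pos (Suc j) w"
  defines "e \<equiv> nat ((- int (snd (w ! p))) mod int r)"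
  shows "breduce r j w \<in> G r j \<and> bdecode_step r (Suc p, e) (breduce r j w) = w"
proof -
  define B where "B = butlast w"
  define l where "l = last w"
  from w have "length w = Suc j" by (simp add: G_def)
  then have len: "length B = j" and split: "w = B @ [l]"
    unfolding B_def l_def by (auto intro: append_butlast_last_id[symmetric])
  from pos_in_G[OF w, of "Suc j"] have "p < Suc j" "fst (w ! p) = Suc j" by (simp_all add: p_def)
  from w \<open>p < Suc j\<close> have z: "snd (w ! p) < r" by (simp add: G_def)
  then have rz: "(r - e) mod r = snd (w ! p)" by (simp add: e_def minus_neg_color_mod)
  show ?thesis
  proof (cases "p = j")
    case True
    with split len \<open>fst (w ! p) = Suc j\<close> rz have l: "l = (Suc j, (r - e) mod r)"
      by (simp add: nth_append prod_eq_iff)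
    have "breduce r j w = B" using True by (simp add: breduce_def p_def B_def)
    with w split l len True show ?thesis by (simp add: butlast_in_G)
  next
    case False
    with \<open>p < Suc j\<close> have pj: "p < j" by simp
    define y where "y = nat ((int (snd l) - int e) mod int r)"
    from z have "y < r" by (simp add: y_def nat_less_iff)
    have red: "breduce r j w = B[p := (fst l, y)]"
      using pj by (simp add: breduce_def Let_def p_def e_def B_def l_def y_def)
    from split pj len have Bp: "B ! p = w ! p" by (simp add: nth_append)
    have "snd l < r" using w split by (simp add: G_def)
    then have "(y + e) mod r = snd l" by (simp add: y_def sub_color_add_color)
    with red pj len rz Bp \<open>fst (w ! p) = Suc j\<close>
    have "bdecode_step r (Suc p, e) (breduce r j w) = B[p := (Suc j, snd (w ! p))] @ [l]"
      by simp
    also have "\<dots> = w"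
      using split Bp \<open>fst (w ! p) = Suc j\<close> by (metis list_update_id prod.collapse)
    finally show ?thesis
      using butlast_update_in_G[of B l r j p y] w split len pj Bp \<open>fst (w ! p) = Suc j\<close> \<open>y < r\<close>
        red
      by simp
  qed
qed

lemma bdecode_bcode: "w \<in> G r n \<Longrightarrow> bdecode r (bcode r n w) = w"
proof (induction n arbitrary: w)
  case 0
  then show ?case by (simp add: bdecode_def G_def)
next
  case (Suc j)
  define p where "p = pos (Suc j) w"
  define e where "e = nat ((- int (snd (w ! p))) mod int r)"
  from breduce_in_G_and_bdecode_step[OF Suc.prems]
  have red: "breduce r j w \<in> G r j" "bdecode_step r (Suc p, e) (breduce r j w) = w"
    by (simp_all add: p_def e_def)
  have "bdecode r (bcode r (Suc j) w) = bdecode_step r (Suc p, e) (bdecode r (bcode r j (breduce r j w)))"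
    by (simp only: bcode_Suc) (simp add: bdecode_def p_def e_def)
  also have "\<dots> = w" using red by (simp add: Suc.IH)
  finally show ?case .
qed

lemma inv_into_bcode:
  assumes "cs \<in> CS r n"
  shows "inv_into (G r n) (bcode r n) cs = bdecode r cs"
proof -
  from bdecode_in_G_and_bcode[OF assms]
  have img: "cs \<in> bcode r n ` G r n" by (metis image_eqI)
  then have "inv_into (G r n) (bcode r n) cs \<in> G r n" by (rule inv_into_into)
  then have "inv_into (G r n) (bcode r n) cs = bdecode r (bcode r n (inv_into (G r n) (bcode r n) cs))"
    by (simp add: bdecode_bcode)
  also have "\<dots> = bdecode r cs" using img by (simp add: f_inv_into_f)
  finally show ?thesis .
qed

lemma set_take_drop_Suc:
  assumes "distinct xs" "p < length xs"
  shows "set (take p xs @ drop (Suc p) xs) = set xs - {xs ! p}"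
proof -
  have xs: "xs = take p xs @ xs ! p # drop (Suc p) xs" using assms(2) by (simp add: id_take_nth_drop)
  then have "distinct (take p xs @ xs ! p # drop (Suc p) xs)" using assms(1) by simp
  then have "xs ! p \<notin> set (take p xs @ drop (Suc p) xs)" by auto
  moreover have "set xs = insert (xs ! p) (set (take p xs @ drop (Suc p) xs))" by (subst xs) auto
  ultimately show ?thesis by auto
qed

lemma delete_max_in_G:
  assumes w: "w \<in> G r (Suc j)" and p: "p < Suc j" "fst (w ! p) = Suc j"
  shows "take p w @ drop (Suc p) w \<in> G r j"
proof -
  from w have len: "length w = Suc j" and dist: "distinct (map fst w)"
    and vals: "set (map fst w) = {1..Suc j}" by (simp_all add: G_def)
  from set_take_drop_Suc[OF dist, of p] p len vals
  have "set (map fst (take p w @ drop (Suc p) w)) = {1..Suc j} - {Suc j}"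
    by (simp add: take_map drop_map)
  also have "\<dots> = {1..j}" by auto
  finally show ?thesis
    using w p len by (auto simp: mem_G_iff dest: in_set_takeD in_set_dropD)
qed

lemma acode_in_CS: "w \<in> G r n \<Longrightarrow> acode n w \<in> CS r n"
proof (induction n arbitrary: w)
  case 0
  then show ?case by (simp add: CS_def)
next
  case (Suc j)
  define p where "p = pos (Suc j) w"
  from pos_in_G[OF Suc.prems, of "Suc j"] have p: "p < Suc j" "fst (w ! p) = Suc j"
    by (simp_all add: p_def)
  with Suc.prems have "snd (w ! p) < r" by (simp add: G_def)
  with Suc.IH[OF delete_max_in_G[OF Suc.prems p]] p show ?case
    by (simp add: snoc_in_CS_iff Let_def p_def[symmetric])
qed

lemma bdecode_step_nth_less:
  assumes "i < c - 1" "c \<le> Suc (length t)"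
  shows "bdecode_step r (c, e) t ! i = t ! i"
  using assms by (auto simp: Let_def nth_append)

lemma nth_le_in_G: "w \<in> G r n \<Longrightarrow> i < n \<Longrightarrow> fst (w ! i) \<le> n"
  by (auto simp: G_def dest!: nth_mem[of i w] intro!: imageI)

lemma bdecode_acode_le_prefix_Max:
  "w \<in> G r n \<Longrightarrow> i < n \<Longrightarrow> fst (bdecode r (acode n w) ! i) \<le> Max (fst ` set (take (Suc i) w))"
proof (induction n arbitrary: w i)
  case 0
  then show ?case by simp
next
  case (Suc j)
  define p where "p = pos (Suc j) w"
  define w' where "w' = take p w @ drop (Suc p) w"
  define e where "e = snd (w ! p)"
  from pos_in_G[OF Suc.prems(1), of "Suc j"] have p: "p < Suc j" "fst (w ! p) = Suc j"
    by (simp_all add: p_def)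
  have w': "w' \<in> G r j" using delete_max_in_G[OF Suc.prems(1) p] by (simp add: w'_def)
  have e: "e < r" using Suc.prems(1) p by (simp add: e_def G_def)
  have dec: "bdecode r (acode (Suc j) w) = bdecode_step r (Suc p, e) (bdecode r (acode j w'))"
    by (simp add: bdecode_def Let_def p_def w'_def e_def)
  from bdecode_in_G_and_bcode[OF acode_in_CS[OF w']]
  have t: "bdecode r (acode j w') \<in> G r j" ..
  show ?case
  proof (cases "i < p")
    case True
    from t have len: "length (bdecode r (acode j w')) = j" by (simp add: G_def)
    have "bdecode r (acode (Suc j) w) ! i = bdecode r (acode j w') ! i"
      unfolding dec by (rule bdecode_step_nth_less) (use True p len in simp_all)
    moreover from True p Suc.prems(1) have "take (Suc i) w' = take (Suc i) w"
      by (simp add: w'_def G_def)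
    ultimately show ?thesis using True p Suc.IH[OF w', of i] by simp
  next
    case False
    from t p e have "bdecode_step r (Suc p, e) (bdecode r (acode j w')) \<in> G r (Suc j)"
      by (intro bdecode_step_in_G) simp_all
    then have "fst (bdecode r (acode (Suc j) w) ! i) \<le> Suc j"
      using Suc.prems(2) dec by (simp add: nth_le_in_G)
    also have "Suc j \<le> Max (fst ` set (take (Suc i) w))"
    proof (rule Max_ge)
      from False Suc.prems have "p < length (take (Suc i) w)" by (simp add: G_def)
      then have "take (Suc i) w ! p \<in> set (take (Suc i) w)" by (rule nth_mem)
      with False have "w ! p \<in> set (take (Suc i) w)" by simp
      then show "Suc j \<in> fst ` set (take (Suc i) w)" using p by force
    qed simp
    finally show ?thesis .
  qed
qed

theorem lemma4p4:
  fixes r n :: nat and w :: cword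
  assumes "1 \<le> r" and "w \<in> G r n"
  shows "phi r n w \<in> Gf r n (minseq w)"
proof -
  have code: "acode n w \<in> CS r n" using assms(2) by (rule acode_in_CS)
  then have phi: "phi r n w = bdecode r (acode n w)"
    by (simp add: phi_def Acode_def Bcode_def[abs_def] inv_into_bcode)
  have "bdecode r (acode n w) \<in> G r n"
    using bdecode_in_G_and_bcode[OF code] ..
  moreover have "fst (bdecode r (acode n w) ! (i - 1)) \<le> minseq w i" if "i \<in> {1..n}" for i
    using bdecode_acode_le_prefix_Max[OF assms(2), of "i - 1"] that by (auto simp: minseq_def)
  ultimately show ?thesis by (simp add: Gf_def phi)
qed

end
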